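(* Let $\rho$ be a probability distribution on $\mathbb{R}^d\times\mathbb{R}$ with $\mathbb{E}\|a\|^2<\infty$, $\mathbb{E}[b^2]<\infty$, $H=\mathbb{E}[aa^\top]$ invertible, and let $x_*$ minimize $\mathcal{R}(x)=\frac12\mathbb{E}_\rho(\langle x,a\rangle-b)^2$. Assume there are finite constants $R,\sigma,\tilde\kappa$ with $\mathbb{E}[\|a\|^2aa^\top]\preccurlyeq R^2H$, $\mathbb{E}[(b-\langle x_*,a\rangle)^2aa^\top]\preccurlyeq\sigma^2H$ and $\mathbb{E}[\|a\|^2_{H^{-1}}aa^\top]\preccurlyeq\tilde\kappa H$, and let $\alpha,\beta>0$ satisfy $(\alpha+2\beta)R^2\le1$ and $\alpha\le\frac{\beta}{2\tilde\kappa}$. Let $\theta^v_t$ be the variance process defined in the context. Then for every $t\ge0$, $$\mathbb{E}[\theta^v_t\otimes\theta^v_t]\preccurlyeq t^2\sigma^2\begin{bmatrix}2\alpha(\beta H)^{-1}+(2\beta-3\alpha)I & \alpha\beta^{-1}(2\beta-\alpha)I\\ \alpha\beta^{-1}(2\beta-\alpha)I & 2\alpha^2\beta^{-1}I\end{bmatrix}.$$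
   Context: $\preccurlyeq$ is the Loewner order, $\|a\|^2_{H^{-1}}=a^\top H^{-1}a$, $\theta\otimes\theta=\theta\theta^\top$. Let $(a_t,b_t)_{t\ge0}$ be i.i.d. from $\rho$ and define $J_t=\begin{bmatrix} I-\beta a_ta_t^\top & I-\beta a_ta_t^\top\\ -\alpha a_ta_t^\top & I-\alpha a_ta_t^\top\end{bmatrix}$ and $\epsilon_{t+1}=(t+1)(b_t-\langle x_*,a_t\rangle)\begin{bmatrix}\beta a_t\\ \alpha a_t\end{bmatrix}\in\mathbb{R}^{2d}$. The variance process is $\theta^v_0=0\in\mathbb{R}^{2d}$, $\theta^v_{t+1}=J_t\theta^v_t+\epsilon_{t+1}$. *)

theory Defs
  imports "HOL-Probability.Probability"
begin

definition outer :: "real^'n \<Rightarrow> real^'m \<Rightarrow> real^'m^'n" where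
  "outer u v = (\<chi> i j. u $ i * v $ j)"

definition loewner_le :: "real^'n^'n \<Rightarrow> real^'n^'n \<Rightarrow> bool" where
  "loewner_le A B \<longleftrightarrow> (\<forall>x. x \<bullet> (A *v x) \<le> x \<bullet> (B *v x))"

definition stack :: "real^'d \<Rightarrow> real^'d \<Rightarrow> real^('d + 'd)" where
  "stack u v = (\<chi> i. case i of Inl k \<Rightarrow> u $ k | Inr k \<Rightarrow> v $ k)"

definition blockm :: "real^'d^'d \<Rightarrow> real^'d^'d \<Rightarrow> real^'d^'d \<Rightarrow> real^'d^'d
    \<Rightarrow> real^('d + 'd)^('d + 'd)" where
  "blockm A B C D = (\<chi> i j. case i of
      Inl p \<Rightarrow> (case j of Inl q \<Rightarrow> A $ p $ q | Inr q \<Rightarrow> B $ p $ q)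
    | Inr p \<Rightarrow> (case j of Inl q \<Rightarrow> C $ p $ q | Inr q \<Rightarrow> D $ p $ q))"

definition risk :: "((real^'d) \<times> real) measure \<Rightarrow> real^'d \<Rightarrow> real" where
  "risk \<rho> x = (1/2) * integral\<^sup>L \<rho> (\<lambda>(a, b). (x \<bullet> a - b)^2)"

definition Jmat :: "real \<Rightarrow> real \<Rightarrow> real^'d \<Rightarrow> real^('d + 'd)^('d + 'd)" where
  "Jmat \<alpha> \<beta> a = blockm (mat 1 - \<beta> *\<^sub>R outer a a) (mat 1 - \<beta> *\<^sub>R outer a a)
                          (- (\<alpha> *\<^sub>R outer a a)) (mat 1 - \<alpha> *\<^sub>R outer a a)"

definition epsv :: "real \<Rightarrow> real \<Rightarrow> real^'d \<Rightarrow> nat \<Rightarrow> real^'d \<Rightarrow> real \<Rightarrow> real^('d + 'd)" where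
  "epsv \<alpha> \<beta> xs t a b = (real (t + 1) * (b - xs \<bullet> a)) *\<^sub>R stack (\<beta> *\<^sub>R a) (\<alpha> *\<^sub>R a)"

text \<open>Variance process along a sample path z (z t = (a_t, b_t)).\<close>
fun theta_v :: "real \<Rightarrow> real \<Rightarrow> real^'d \<Rightarrow> (nat \<Rightarrow> (real^'d) \<times> real) \<Rightarrow> nat \<Rightarrow> real^('d + 'd)" where
  "theta_v \<alpha> \<beta> xs z 0 = 0"
| "theta_v \<alpha> \<beta> xs z (Suc t) =
     Jmat \<alpha> \<beta> (fst (z t)) *v theta_v \<alpha> \<beta> xs z t + epsv \<alpha> \<beta> xs t (fst (z t)) (snd (z t))"

end

theory Submission
  imports Defs
begin

(*
  Write u = (x, y), w = beta x + alpha y and Sigma_t = E[theta_t theta_t^T].  Since theta_t depends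
  only on the samples before t, the recursion u.theta_{t+1} = (J_t^T u).theta_t + u.eps_{t+1} and
  independence give
    E (u.theta_{t+1})^2 = E_a[(J^T u)^T Sigma_t (J^T u)] + E (u.eps_{t+1})^2,
  the cross term vanishing because theta_t is centred; the mean stays zero because of the first-order
  optimality condition E[(b - <x_*, a>) a] = 0.  The matrix B of the statement is a Lyapunov matrix
  for the noiseless dynamics: the bounds given by R and kappa and the step-size conditions yield
  E_a[(J^T u)^T B (J^T u)] <= u^T B u - w^T H w, while the noise contributes at most
  (t+1)^2 sigma^2 w^T H w.  As B is positive semidefinite, Sigma_t <= t^2 sigma^2 B then implies
  Sigma_{t+1} <= (t+1)^2 sigma^2 B.
*)

section \<open>Linear algebra\<close>

lemma sum_UNIV_Plus:
  "(\<Sum>i\<in>(UNIV::('a::finite + 'b::finite) set). g i) = (\<Sum>i\<in>UNIV. g (Inl i)) + (\<Sum>i\<in>UNIV. g (Inr i))"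
  by (subst UNIV_Plus_UNIV[symmetric], subst sum.Plus) (auto simp: comp_def)

lemma inner_outer_mult: "x \<bullet> (outer a b *v y) = (x \<bullet> a) * (b \<bullet> y)"
  by (simp add: outer_def matrix_vector_mult_def inner_vec_def sum_distrib_left sum_distrib_right
      mult_ac) (rule sum.swap)

lemma norm_outer: "norm (outer a b) = norm a * norm b"
proof -
  have "outer a b \<bullet> outer a b = (a \<bullet> a) * (b \<bullet> b)"
    by (simp add: outer_def inner_vec_def sum_distrib_left sum_distrib_right mult_ac)
  then show ?thesis
    by (simp add: norm_eq_sqrt_inner real_sqrt_mult)
qed

lemma vector_matrix_outer: "x v* outer a b = (x \<bullet> a) *\<^sub>R b"
  by (simp add: vec_eq_iff outer_def vector_matrix_mult_def inner_vec_def sum_distrib_left mult_ac)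

lemma ex_stack: "\<exists>p q. u = stack p q"
  by (rule exI[of _ "\<chi> k. u $ Inl k"], rule exI[of _ "\<chi> k. u $ Inr k"])
     (simp add: stack_def vec_eq_iff split: sum.split)

lemma stack_diff: "stack p q - stack p' q' = stack (p - p') (q - q')"
  by (simp add: stack_def vec_eq_iff split: sum.split)

lemma scaleR_stack: "c *\<^sub>R stack p q = stack (c *\<^sub>R p) (c *\<^sub>R q)"
  by (simp add: stack_def vec_eq_iff split: sum.split)

lemma inner_stack: "stack p q \<bullet> stack p' q' = p \<bullet> p' + q \<bullet> q'"
  by (simp add: stack_def inner_vec_def sum_UNIV_Plus)

lemma inner_stack_blockm:
  "stack p q \<bullet> (blockm A B C D *v stack p' q') =
     p \<bullet> (A *v p') + p \<bullet> (B *v q') + q \<bullet> (C *v p') + q \<bullet> (D *v q')"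
  by (simp add: stack_def blockm_def inner_vec_def matrix_vector_mult_def sum_UNIV_Plus
      algebra_simps sum.distrib sum_distrib_left)

lemma stack_vector_matrix_blockm:
  "stack x y v* blockm A B C D = stack (x v* A + y v* C) (x v* B + y v* D)"
  by (simp add: vec_eq_iff stack_def blockm_def vector_matrix_mult_def sum_UNIV_Plus
      split: sum.split)

lemma stack_vector_matrix_Jmat:
  "stack x y v* Jmat \<alpha> \<beta> a = stack x (x + y) - (a \<bullet> (\<beta> *\<^sub>R x + \<alpha> *\<^sub>R y)) *\<^sub>R stack a a"
proof -
  have "y v* - (\<alpha> *\<^sub>R outer a a) = - ((\<alpha> * (y \<bullet> a)) *\<^sub>R a)"
    by (simp add: vec_eq_iff vector_matrix_mult_def outer_def inner_vec_def sum_distrib_left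
        sum_negf mult_ac)
  then show ?thesis
    unfolding Jmat_def stack_vector_matrix_blockm scaleR_stack stack_diff
    by (simp add: vector_matrix_mult_diff_rdistrib vector_scaleR_matrix_ac vector_matrix_outer
        inner_add_right inner_commute algebra_simps)
qed

lemma inner_stack_epsv:
  "stack x y \<bullet> epsv \<alpha> \<beta> xs t a b = real (t + 1) * ((b - xs \<bullet> a) * (a \<bullet> (\<beta> *\<^sub>R x + \<alpha> *\<^sub>R y)))"
  unfolding epsv_def inner_scaleR_right inner_stack inner_add_right
  by (simp add: inner_commute algebra_simps)

lemma matrix_inv_right: "invertible A \<Longrightarrow> A ** matrix_inv A = mat 1"
  and matrix_inv_left: "invertible A \<Longrightarrow> matrix_inv A ** A = mat 1"
  unfolding invertible_def matrix_inv_def by (metis (mono_tags, lifting) someI_ex)+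

lemma matrix_inv_scaleR:
  fixes A :: "real^'n^'n"
  assumes "invertible A" "k \<noteq> 0"
  shows "matrix_inv (k *\<^sub>R A) = (1/k) *\<^sub>R matrix_inv A"
proof -
  have inv: "invertible (k *\<^sub>R A)" using assms by (simp add: scalar_invertible)
  let ?B = "matrix_inv (k *\<^sub>R A)"
  have "(k *\<^sub>R A) ** ((1/k) *\<^sub>R matrix_inv A) = mat 1"
    using assms by (simp add: matrix_scalar_ac matrix_inv_right flip: scalar_matrix_assoc)
  then have "?B = ?B ** ((k *\<^sub>R A) ** ((1/k) *\<^sub>R matrix_inv A))" by simp
  also have "\<dots> = (?B ** (k *\<^sub>R A)) ** ((1/k) *\<^sub>R matrix_inv A)" by (simp add: matrix_mul_assoc)
  also have "\<dots> = (1/k) *\<^sub>R matrix_inv A" using matrix_inv_left[OF inv] by simp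
  finally show ?thesis .
qed

lemma inner_matrix_inv_commute:
  fixes A :: "real^'n^'n"
  assumes "invertible A" and sym: "\<And>v w. v \<bullet> (A *v w) = w \<bullet> (A *v v)"
  shows "x \<bullet> (matrix_inv A *v y) = y \<bullet> (matrix_inv A *v x)"
proof -
  have cancel: "A *v (matrix_inv A *v v) = v" for v
    by (simp add: matrix_vector_mul_assoc matrix_inv_right[OF assms(1)])
  have "x \<bullet> (matrix_inv A *v y) = (A *v (matrix_inv A *v x)) \<bullet> (matrix_inv A *v y)"
    by (simp add: cancel)
  also have "\<dots> = (matrix_inv A *v x) \<bullet> (A *v (matrix_inv A *v y))"
    by (simp add: sym inner_commute)
  also have "\<dots> = y \<bullet> (matrix_inv A *v x)"
    by (simp add: cancel inner_commute)
  finally show ?thesis .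
qed

text \<open>Expand \<open>(c z - p)\<^sup>T A (c z - p) \<ge> 0\<close> at \<open>z = A\<^sup>-\<^sup>1 p\<close>.\<close>
lemma inner_le_matrix_inv:
  fixes A :: "real^'n^'n"
  assumes "invertible A" and sym: "\<And>v w. v \<bullet> (A *v w) = w \<bullet> (A *v v)"
    and psd: "\<And>v. 0 \<le> v \<bullet> (A *v v)" and upper: "\<And>v. v \<bullet> (A *v v) \<le> c * (v \<bullet> v)"
    and "c > 0"
  shows "p \<bullet> p \<le> c * (p \<bullet> (matrix_inv A *v p))"
proof -
  define z where "z = matrix_inv A *v p"
  have Az: "A *v z = p"
    by (simp add: z_def matrix_vector_mul_assoc matrix_inv_right[OF assms(1)])
  have "0 \<le> (c *\<^sub>R z - p) \<bullet> (A *v (c *\<^sub>R z - p))" by (rule psd)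
  also have "\<dots> = c\<^sup>2 * (p \<bullet> z) - 2 * c * (p \<bullet> p) + p \<bullet> (A *v p)"
    using sym[of z p]
    by (simp add: Az matrix_vector_mult_diff_distrib matrix_vector_mult_scaleR inner_diff_left
        inner_diff_right inner_commute power2_eq_square algebra_simps)
  also have "\<dots> \<le> c\<^sup>2 * (p \<bullet> z) - c * (p \<bullet> p)"
    using upper[of p] by simp
  finally have "c * (p \<bullet> p) \<le> c * (c * (p \<bullet> z))" by (simp add: power2_eq_square algebra_simps)
  then show ?thesis using \<open>c > 0\<close> by (simp add: z_def)
qed

lemma quadratic_form_nonneg:
  fixes p q :: "'a::real_inner"
  assumes "a > 0" "c\<^sup>2 \<le> a * b"
  shows "0 \<le> a * (p \<bullet> p) + 2 * c * (p \<bullet> q) + b * (q \<bullet> q)"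
proof -
  have "0 \<le> (a *\<^sub>R p + c *\<^sub>R q) \<bullet> (a *\<^sub>R p + c *\<^sub>R q) + (a * b - c\<^sup>2) * (q \<bullet> q)"
    using assms(2) by simp
  also have "\<dots> = a * (a * (p \<bullet> p) + 2 * c * (p \<bullet> q) + b * (q \<bullet> q))"
    by (simp add: inner_add_left inner_add_right inner_commute algebra_simps power2_eq_square)
  finally show ?thesis using assms(1) by (simp add: zero_le_mult_iff)
qed

lemma eq_0_if_linear_le_quadratic:
  fixes g c :: real
  assumes "\<And>s. s * g \<le> s\<^sup>2 * c"
  shows "g = 0"
proof (rule ccontr)
  assume "g \<noteq> 0"
  define k where "k = \<bar>c\<bar> + 1"
  have k: "k > 0" by (simp add: k_def add_pos_nonneg)
  have "g\<^sup>2 / k = (g / k) * g" by (simp add: power2_eq_square)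
  also have "\<dots> \<le> (g / k)\<^sup>2 * c" by (rule assms)
  also have "\<dots> \<le> (g / k)\<^sup>2 * \<bar>c\<bar>" by (simp add: mult_left_mono)
  finally have "g\<^sup>2 * k \<le> g\<^sup>2 * \<bar>c\<bar>"
    using k by (simp add: power_divide field_simps power2_eq_square)
  then have "k \<le> \<bar>c\<bar>" using \<open>g \<noteq> 0\<close> by simp
  then show False by (simp add: k_def)
qed

definition variance_matrix :: "real \<Rightarrow> real \<Rightarrow> real^'d^'d \<Rightarrow> real^('d + 'd)^('d + 'd)" where
  "variance_matrix \<alpha> \<beta> H =
     blockm ((2 * \<alpha>) *\<^sub>R matrix_inv (\<beta> *\<^sub>R H) + (2 * \<beta> - 3 * \<alpha>) *\<^sub>R mat 1)
            ((\<alpha> / \<beta> * (2 * \<beta> - \<alpha>)) *\<^sub>R mat 1)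
            ((\<alpha> / \<beta> * (2 * \<beta> - \<alpha>)) *\<^sub>R mat 1)
            ((2 * \<alpha>^2 / \<beta>) *\<^sub>R mat 1)"

context
  fixes \<alpha> \<beta> :: real and H :: "real^'d^'d"
  assumes H_inv: "invertible H" and H_sym: "\<And>v w. v \<bullet> (H *v w) = w \<bullet> (H *v v)"
    and \<beta>_nz: "\<beta> \<noteq> 0"
begin

lemma inner_stack_variance_matrix:
  "stack p q \<bullet> (variance_matrix \<alpha> \<beta> H *v stack p' q') =
     2 * \<alpha> / \<beta> * (p \<bullet> (matrix_inv H *v p')) + (2 * \<beta> - 3 * \<alpha>) * (p \<bullet> p')
     + \<alpha> / \<beta> * (2 * \<beta> - \<alpha>) * (p \<bullet> q' + q \<bullet> p') + 2 * \<alpha>\<^sup>2 / \<beta> * (q \<bullet> q')"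
  using \<beta>_nz
  by (simp add: variance_matrix_def inner_stack_blockm matrix_inv_scaleR[OF H_inv]
      matrix_vector_mult_add_rdistrib algebra_simps flip: scaleR_matrix_vector_assoc)

lemma inner_variance_matrix_commute:
  "u \<bullet> (variance_matrix \<alpha> \<beta> H *v v) = v \<bullet> (variance_matrix \<alpha> \<beta> H *v u)"
proof -
  obtain p q p' q' where "u = stack p q" "v = stack p' q'" by (meson ex_stack)
  then show ?thesis
    by (simp add: inner_stack_variance_matrix inner_matrix_inv_commute[OF H_inv H_sym]
        inner_commute)
qed

lemma quadratic_variance_matrix_Jmat:
  fixes x y a :: "real^'d"
  defines "B \<equiv> variance_matrix \<alpha> \<beta> H" and "w \<equiv> \<beta> *\<^sub>R x + \<alpha> *\<^sub>R y" and "Hi \<equiv> matrix_inv H"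
  shows "(stack x y v* Jmat \<alpha> \<beta> a) \<bullet> (B *v (stack x y v* Jmat \<alpha> \<beta> a)) =
     stack x y \<bullet> (B *v stack x y) + 4 * \<alpha> / \<beta> * (x \<bullet> w)
     - 4 * \<alpha> / \<beta> * ((a \<bullet> w) * (a \<bullet> (Hi *v x))) - 2 * (2 * \<beta> + \<alpha>) / \<beta> * ((a \<bullet> w) * (a \<bullet> w))
     + 2 * \<alpha> / \<beta> * ((a \<bullet> (Hi *v a)) * (a \<bullet> w)\<^sup>2) + (2 * \<beta> + \<alpha>) * ((norm a)\<^sup>2 * (a \<bullet> w)\<^sup>2)"
proof -
  define s where "s = a \<bullet> w"
  define u' where "u' = stack x (x + y)"
  define a' where "a' = stack a a"
  have Q_shift: "u' \<bullet> (B *v u') = stack x y \<bullet> (B *v stack x y) + 4 * \<alpha> / \<beta> * (x \<bullet> w)"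
    using \<beta>_nz
    by (simp add: u'_def B_def w_def inner_stack_variance_matrix inner_add_left inner_add_right
        inner_commute field_simps power2_eq_square)
  have cross: "a' \<bullet> (B *v u') = 2 * \<alpha> / \<beta> * (a \<bullet> (Hi *v x)) + (2 * \<beta> + \<alpha>) / \<beta> * s"
    using \<beta>_nz
    by (simp add: a'_def u'_def B_def Hi_def s_def w_def inner_stack_variance_matrix
        inner_add_left inner_add_right field_simps power2_eq_square)
  have Q_a: "a' \<bullet> (B *v a') = 2 * \<alpha> / \<beta> * (a \<bullet> (Hi *v a)) + (2 * \<beta> + \<alpha>) * (a \<bullet> a)"
    using \<beta>_nz
    by (simp add: a'_def B_def Hi_def inner_stack_variance_matrix field_simps power2_eq_square)
  have "(stack x y v* Jmat \<alpha> \<beta> a) \<bullet> (B *v (stack x y v* Jmat \<alpha> \<beta> a))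
      = (u' - s *\<^sub>R a') \<bullet> (B *v (u' - s *\<^sub>R a'))"
    by (simp add: stack_vector_matrix_Jmat u'_def a'_def s_def w_def)
  also have "\<dots> = u' \<bullet> (B *v u') - 2 * s * (a' \<bullet> (B *v u')) + s\<^sup>2 * (a' \<bullet> (B *v a'))"
    using inner_variance_matrix_commute[of u' a']
    by (simp add: B_def matrix_vector_mult_diff_distrib matrix_vector_mult_scaleR inner_diff_left
        inner_diff_right power2_eq_square algebra_simps)
  finally show ?thesis
    unfolding Q_shift cross Q_a power2_norm_eq_inner using \<beta>_nz
    by (simp add: s_def field_simps power2_eq_square)
qed

lemma variance_matrix_nonneg:
  assumes "\<alpha> > 0" "\<beta> > 0"
    and Hi_lower: "\<And>p. (2 * \<beta> + \<alpha>) * (p \<bullet> p) \<le> p \<bullet> (matrix_inv H *v p)"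
  shows "0 \<le> u \<bullet> (variance_matrix \<alpha> \<beta> H *v u)"
proof -
  obtain p q where u: "u = stack p q" by (meson ex_stack)
  define a where "a = 2 * \<beta> + \<alpha> + 2 * \<alpha>\<^sup>2 / \<beta>"
  define c where "c = \<alpha> / \<beta> * (2 * \<beta> - \<alpha>)"
  define b where "b = 2 * \<alpha>\<^sup>2 / \<beta>"
  have "a * b - c\<^sup>2 = 6 * \<alpha>^3 / \<beta> + 3 * \<alpha>^4 / \<beta>\<^sup>2"
    using assms(2) by (simp add: a_def b_def c_def field_simps power2_eq_square power3_eq_cube
        power4_eq_xxxx)
  moreover have "0 \<le> 6 * \<alpha>^3 / \<beta> + 3 * \<alpha>^4 / \<beta>\<^sup>2" using assms(1,2) by simp
  ultimately have disc: "c\<^sup>2 \<le> a * b" by linarith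
  have "a > 0" using assms(1,2) by (simp add: a_def add_pos_nonneg)
  then have "0 \<le> a * (p \<bullet> p) + 2 * c * (p \<bullet> q) + b * (q \<bullet> q)"
    using disc by (rule quadratic_form_nonneg)
  moreover have "2 * \<alpha> / \<beta> * ((2 * \<beta> + \<alpha>) * (p \<bullet> p)) \<le> 2 * \<alpha> / \<beta> * (p \<bullet> (matrix_inv H *v p))"
    using Hi_lower[of p] assms(1,2) by (intro mult_left_mono) auto
  moreover have "a * (p \<bullet> p) = 2 * \<alpha> / \<beta> * ((2 * \<beta> + \<alpha>) * (p \<bullet> p)) + (2 * \<beta> - 3 * \<alpha>) * (p \<bullet> p)"
    using assms(2) by (simp add: a_def field_simps power2_eq_square)
  moreover have "u \<bullet> (variance_matrix \<alpha> \<beta> H *v u) = 2 * \<alpha> / \<beta> * (p \<bullet> (matrix_inv H *v p))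
      + (2 * \<beta> - 3 * \<alpha>) * (p \<bullet> p) + 2 * c * (p \<bullet> q) + b * (q \<bullet> q)"
    by (simp add: u inner_stack_variance_matrix b_def c_def inner_commute)
  ultimately show ?thesis by linarith
qed

end

section \<open>Second moments and independence\<close>

lemma fixes F :: "'a \<Rightarrow> real^'n^'m"
  assumes "integrable M F"
  shows integrable_inner_matrix_vector: "integrable M (\<lambda>z. x \<bullet> (F z *v y))"
    and integral_inner_matrix_vector: "(\<integral>z. x \<bullet> (F z *v y) \<partial>M) = x \<bullet> (integral\<^sup>L M F *v y)"
proof -
  have "bounded_linear (\<lambda>A::real^'n^'m. x \<bullet> (A *v y))"
    by (intro bounded_linear_compose[OF bounded_linear_inner_right] matrix_vector_mult_linear_continuous_at
        linear_conv_bounded_linear[THEN iffD1] linearI)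
       (simp_all add: matrix_vector_mult_add_rdistrib scaleR_matrix_vector_assoc)
  then show "integrable M (\<lambda>z. x \<bullet> (F z *v y))" "(\<integral>z. x \<bullet> (F z *v y) \<partial>M) = x \<bullet> (integral\<^sup>L M F *v y)"
    using integrable_bounded_linear integral_bounded_linear assms by blast+
qed

lemma integral_quadratic_le_loewner:
  fixes F :: "'a \<Rightarrow> real^'n^'n"
  assumes "integrable M F" "loewner_le (integral\<^sup>L M F) A"
  shows "(\<integral>z. w \<bullet> (F z *v w) \<partial>M) \<le> w \<bullet> (A *v w)"
  using assms(2) unfolding integral_inner_matrix_vector[OF assms(1)] loewner_le_def by blast

lemma integrable_mult_of_square_integrable:
  fixes f g :: "'a \<Rightarrow> real"
  assumes "f \<in> borel_measurable M" "g \<in> borel_measurable M"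
    and "integrable M (\<lambda>x. (f x)\<^sup>2)" "integrable M (\<lambda>x. (g x)\<^sup>2)"
  shows "integrable M (\<lambda>x. f x * g x)"
proof (rule Bochner_Integration.integrable_bound)
  show "integrable M (\<lambda>x. (f x)\<^sup>2 + (g x)\<^sup>2)" using assms(3,4) by simp
  have "\<bar>f x * g x\<bar> \<le> (f x)\<^sup>2 + (g x)\<^sup>2" for x
    using sum_squares_bound[of "f x" "g x"] sum_squares_bound[of "f x" "- g x"]
      zero_le_power2[of "f x"] zero_le_power2[of "g x"]
    by (simp add: abs_le_iff)
  then show "AE x in M. norm (f x * g x) \<le> norm ((f x)\<^sup>2 + (g x)\<^sup>2)" by simp
qed (use assms(1,2) in simp)

lemma (in prob_space) indep_var_integral_mult:
  fixes f :: "'b \<Rightarrow> real" and g :: "'a \<Rightarrow> real"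
  assumes indep: "indep_var borel (\<lambda>\<omega>. f (Z \<omega>)) borel (\<lambda>\<omega>. g \<omega>)"
    and Z: "Z \<in> measurable M N" and distr: "distr M N Z = N"
    and f: "f \<in> borel_measurable N" "integrable N f" and g: "integrable M g"
  shows "integrable M (\<lambda>\<omega>. f (Z \<omega>) * g \<omega>)"
    and "(\<integral>\<omega>. f (Z \<omega>) * g \<omega> \<partial>M) = (\<integral>z. f z \<partial>N) * (\<integral>\<omega>. g \<omega> \<partial>M)"
proof -
  have "integrable M (\<lambda>\<omega>. f (Z \<omega>))"
    using integrable_distr_eq[OF Z f(1)] f(2) distr by simp
  moreover have "(\<integral>\<omega>. f (Z \<omega>) \<partial>M) = (\<integral>z. f z \<partial>N)"
    using integral_distr[OF Z f(1)] distr by simp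
  ultimately show "integrable M (\<lambda>\<omega>. f (Z \<omega>) * g \<omega>)"
    "(\<integral>\<omega>. f (Z \<omega>) * g \<omega> \<partial>M) = (\<integral>z. f z \<partial>N) * (\<integral>\<omega>. g \<omega> \<partial>M)"
    using indep_var_integrable[OF indep] indep_var_lebesgue_integral[OF indep] g by simp_all
qed

lemma integral_inner_square_eq_sum:
  fixes \<Theta> :: "'a \<Rightarrow> real^'n"
  assumes "\<And>i j. integrable M (\<lambda>\<omega>. \<Theta> \<omega> $ i * \<Theta> \<omega> $ j)"
  shows "(\<integral>\<omega>. (v \<bullet> \<Theta> \<omega>)\<^sup>2 \<partial>M) = (\<Sum>i\<in>UNIV. \<Sum>j\<in>UNIV. v $ i * v $ j * (\<integral>\<omega>. \<Theta> \<omega> $ i * \<Theta> \<omega> $ j \<partial>M))"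
proof -
  have "(v \<bullet> \<Theta> \<omega>)\<^sup>2 = (\<Sum>i\<in>UNIV. \<Sum>j\<in>UNIV. v $ i * v $ j * (\<Theta> \<omega> $ i * \<Theta> \<omega> $ j))" for \<omega>
    by (simp add: inner_vec_def power2_eq_square sum_product mult_ac)
  then show ?thesis using assms by simp
qed

lemma borel_measurable_vec_nth_comp:
  "V \<in> borel_measurable N \<Longrightarrow> (\<lambda>z. (V z :: real^'n) $ i) \<in> borel_measurable N"
  by (rule measurable_compose[of V, OF _ borel_measurable_continuous_onI]) (auto intro: continuous_intros)

lemma (in finite_measure) integrable_vec_components:
  fixes \<Theta> :: "'a \<Rightarrow> real^'n"
  assumes \<Theta>: "\<Theta> \<in> borel_measurable M" and sq: "\<And>i. integrable M (\<lambda>\<omega>. (\<Theta> \<omega> $ i)\<^sup>2)"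
  shows "integrable M (\<lambda>\<omega>. \<Theta> \<omega> $ i)" and "integrable M (\<lambda>\<omega>. \<Theta> \<omega> $ i * \<Theta> \<omega> $ j)"
  using borel_measurable_vec_nth_comp[OF \<Theta>]
  by (auto intro: square_integrable_imp_integrable integrable_mult_of_square_integrable sq)

lemma integrable_component_square:
  fixes V :: "'a \<Rightarrow> real^'n"
  assumes "V \<in> borel_measurable M" "integrable M (\<lambda>z. (norm (V z))\<^sup>2)"
  shows "integrable M (\<lambda>z. (V z $ i)\<^sup>2)"
proof (rule Bochner_Integration.integrable_bound[OF assms(2)])
  have "(V z $ i)\<^sup>2 \<le> (norm (V z))\<^sup>2" for z
    using component_le_norm_cart by (metis abs_ge_zero power2_abs power_mono)
  then show "AE z in M. norm ((V z $ i)\<^sup>2) \<le> norm ((norm (V z))\<^sup>2)" by simp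
qed (use borel_measurable_vec_nth_comp[OF assms(1)] in simp)

lemma inner_add_square_expand:
  fixes v \<theta> :: "real^'n"
  shows "(v \<bullet> \<theta> + c)\<^sup>2 = (\<Sum>i\<in>UNIV. \<Sum>j\<in>UNIV. (v $ i * v $ j) * (\<theta> $ i * \<theta> $ j))
    + 2 * (\<Sum>i\<in>UNIV. (c * v $ i) * \<theta> $ i) + c\<^sup>2"
  by (simp add: inner_vec_def power2_eq_square sum_product algebra_simps sum_distrib_left)

text \<open>\<open>indep_var\<close> only relates random variables with values in the same space, so the
  independence of \<open>Z\<close> and \<open>\<Theta>\<close> is expressed through real-valued functions of them.\<close>
lemma (in prob_space) indep_affine_moments:
  fixes Z :: "'a \<Rightarrow> 'z" and \<Theta> :: "'a \<Rightarrow> real^'n" and V :: "'z \<Rightarrow> real^'n" and e :: "'z \<Rightarrow> real"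
  assumes Z: "Z \<in> measurable M N" and distr: "distr M N Z = N" and \<Theta>: "\<Theta> \<in> borel_measurable M"
    and indep: "\<And>f g. f \<in> borel_measurable N \<Longrightarrow> g \<in> borel_measurable borel \<Longrightarrow>
      indep_var borel (\<lambda>\<omega>. f (Z \<omega>) :: real) borel (\<lambda>\<omega>. g (\<Theta> \<omega>) :: real)"
    and V: "V \<in> borel_measurable N" "integrable N (\<lambda>z. (norm (V z))\<^sup>2)"
    and e: "e \<in> borel_measurable N" "integrable N (\<lambda>z. (e z)\<^sup>2)"
    and \<Theta>_sq: "\<And>v. integrable M (\<lambda>\<omega>. (v \<bullet> \<Theta> \<omega>)\<^sup>2)"
    and \<Theta>_mean: "\<And>v. (\<integral>\<omega>. v \<bullet> \<Theta> \<omega> \<partial>M) = 0"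
  defines "U \<equiv> \<lambda>\<omega>. V (Z \<omega>) \<bullet> \<Theta> \<omega> + e (Z \<omega>)"
  shows "integrable M U" and "(\<integral>\<omega>. U \<omega> \<partial>M) = (\<integral>z. e z \<partial>N)"
    and "integrable M (\<lambda>\<omega>. (U \<omega>)\<^sup>2)"
    and "integrable N (\<lambda>z. \<integral>\<omega>. (V z \<bullet> \<Theta> \<omega>)\<^sup>2 \<partial>M)"
    and "(\<integral>\<omega>. (U \<omega>)\<^sup>2 \<partial>M) = (\<integral>z. (\<integral>\<omega>. (V z \<bullet> \<Theta> \<omega>)\<^sup>2 \<partial>M) \<partial>N) + (\<integral>z. (e z)\<^sup>2 \<partial>N)"
proof -
  interpret N: prob_space N using prob_space_distr[OF Z] distr by simp
  note \<Theta>_i = borel_measurable_vec_nth_comp[OF \<Theta>] and V_i = borel_measurable_vec_nth_comp[OF V(1)]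
  have "(\<lambda>\<omega>. \<Theta> \<omega> $ i) = (\<lambda>\<omega>. axis i 1 \<bullet> \<Theta> \<omega>)" for i by (simp add: inner_axis')
  then have \<Theta>_i_sq: "integrable M (\<lambda>\<omega>. (\<Theta> \<omega> $ i)\<^sup>2)" and \<Theta>_i_mean: "(\<integral>\<omega>. \<Theta> \<omega> $ i \<partial>M) = 0"
    for i using \<Theta>_sq \<Theta>_mean by metis+
  note \<Theta>_int = integrable_vec_components[OF \<Theta> \<Theta>_i_sq]
  note V_i_sq = integrable_component_square[OF V]
  note V_int = N.integrable_vec_components[OF V(1) V_i_sq]
  have eV: "integrable N (\<lambda>z. e z * V z $ i)" for i
    by (rule integrable_mult_of_square_integrable[OF e(1) V_i e(2) V_i_sq])
  have e_int: "integrable N e" by (rule N.square_integrable_imp_integrable[OF e])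
  have prod: "integrable M (\<lambda>\<omega>. f (Z \<omega>) * g (\<Theta> \<omega>))"
      "(\<integral>\<omega>. f (Z \<omega>) * g (\<Theta> \<omega>) \<partial>M) = (\<integral>z. f z \<partial>N) * (\<integral>\<omega>. g (\<Theta> \<omega>) \<partial>M)"
    if "f \<in> borel_measurable N" "integrable N f" "g \<in> borel_measurable borel" "integrable M (\<lambda>\<omega>. g (\<Theta> \<omega>))"
    for f and g :: "real^'n \<Rightarrow> real"
    using indep_var_integral_mult[OF indep[OF that(1,3)] Z distr that(1,2,4)] by auto
  have comp: "integrable M (\<lambda>\<omega>. f (Z \<omega>))" "(\<integral>\<omega>. f (Z \<omega>) \<partial>M) = (\<integral>z. f z \<partial>N)"
    if "f \<in> borel_measurable N" "integrable N f" for f :: "'z \<Rightarrow> real"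
    using integrable_distr_eq[OF Z that(1)] integral_distr[OF Z that(1)] that(2) distr by auto
  have nth: "(\<lambda>v::real^'n. v $ i) \<in> borel_measurable borel"
    and nth2: "(\<lambda>v::real^'n. v $ i * v $ j) \<in> borel_measurable borel" for i j
    by (intro borel_measurable_continuous_onI continuous_intros)+
  note P1 = prod[OF borel_measurable_times[OF V_i V_i] V_int(2) nth2 \<Theta>_int(2)]
  note P2 = prod[OF borel_measurable_times[OF e(1) V_i] eV nth \<Theta>_int(1)]
  note P3 = prod[OF V_i V_int(1) nth \<Theta>_int(1)]
  note E = comp[OF e(1) e_int] comp[OF borel_measurable_power[OF e(1)] e(2)]
  have U_sum: "U = (\<lambda>\<omega>. (\<Sum>i\<in>UNIV. V (Z \<omega>) $ i * \<Theta> \<omega> $ i) + e (Z \<omega>))"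
    by (simp add: U_def inner_vec_def)
  have U_sq: "(U \<omega>)\<^sup>2 = (\<Sum>i\<in>UNIV. \<Sum>j\<in>UNIV. (V (Z \<omega>) $ i * V (Z \<omega>) $ j) * (\<Theta> \<omega> $ i * \<Theta> \<omega> $ j))
      + 2 * (\<Sum>i\<in>UNIV. (e (Z \<omega>) * V (Z \<omega>) $ i) * \<Theta> \<omega> $ i) + (e (Z \<omega>))\<^sup>2" for \<omega>
    unfolding U_def by (rule inner_add_square_expand)
  have \<Theta>_qf: "(\<integral>\<omega>. (v \<bullet> \<Theta> \<omega>)\<^sup>2 \<partial>M) = (\<Sum>i\<in>UNIV. \<Sum>j\<in>UNIV. v $ i * v $ j * (\<integral>\<omega>. \<Theta> \<omega> $ i * \<Theta> \<omega> $ j \<partial>M))" for v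
    by (rule integral_inner_square_eq_sum[OF \<Theta>_int(2)])
  show "integrable M U" "(\<integral>\<omega>. U \<omega> \<partial>M) = (\<integral>z. e z \<partial>N)"
    unfolding U_sum using P3 E by (auto simp: \<Theta>_i_mean)
  show "integrable M (\<lambda>\<omega>. (U \<omega>)\<^sup>2)"
    unfolding U_sq using P1 P2 E by auto
  show "integrable N (\<lambda>z. \<integral>\<omega>. (V z \<bullet> \<Theta> \<omega>)\<^sup>2 \<partial>M)"
    unfolding \<Theta>_qf
    by (intro Bochner_Integration.integrable_sum Bochner_Integration.integrable_mult_left V_int(2))
  show "(\<integral>\<omega>. (U \<omega>)\<^sup>2 \<partial>M) = (\<integral>z. (\<integral>\<omega>. (V z \<bullet> \<Theta> \<omega>)\<^sup>2 \<partial>M) \<partial>N) + (\<integral>z. (e z)\<^sup>2 \<partial>N)"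
    unfolding U_sq \<Theta>_qf using P1 P2 V_int(2) E
    by (simp add: \<Theta>_i_mean Bochner_Integration.integral_sum Bochner_Integration.integrable_sum
        Bochner_Integration.integrable_mult_left)
qed

section \<open>Measurability of the variance process\<close>

lemma continuous_on_stack [continuous_intros]:
  "continuous_on S f \<Longrightarrow> continuous_on S g \<Longrightarrow> continuous_on S (\<lambda>x. stack (f x) (g x))"
  unfolding stack_def
  by (intro continuous_on_vec_lambda, case_tac i) (auto intro!: continuous_intros)

lemma continuous_on_outer [continuous_intros]:
  "continuous_on S f \<Longrightarrow> continuous_on S g \<Longrightarrow> continuous_on S (\<lambda>x. outer (f x) (g x))"
  unfolding outer_def by (intro continuous_intros)

lemma continuous_on_Jmat_entry [continuous_intros]:
  "continuous_on S f \<Longrightarrow> continuous_on S (\<lambda>x. Jmat \<alpha> \<beta> (f x) $ i $ j)"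
  by (cases i; cases j) (auto simp: Jmat_def blockm_def outer_def mat_def intro!: continuous_intros)

lemma continuous_on_Jmat_mult [continuous_intros]:
  "continuous_on S f \<Longrightarrow> continuous_on S g \<Longrightarrow> continuous_on S (\<lambda>x. Jmat \<alpha> \<beta> (f x) *v g x)"
  unfolding matrix_vector_mult_def by (intro continuous_intros)

lemma continuous_on_epsv [continuous_intros]:
  "continuous_on S f \<Longrightarrow> continuous_on S g \<Longrightarrow> continuous_on S (\<lambda>x. epsv \<alpha> \<beta> xs t (f x) (g x))"
  unfolding epsv_def by (intro continuous_intros)

lemma theta_v_cong: "(\<And>s. s < t \<Longrightarrow> z s = z' s) \<Longrightarrow> theta_v \<alpha> \<beta> xs z t = theta_v \<alpha> \<beta> xs z' t"
  by (induction t) auto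

lemma measurable_theta_v_step:
  fixes N :: "((real^'d) \<times> real) measure"
  assumes N: "sets N = sets borel"
  shows "(\<lambda>(z, v). Jmat \<alpha> \<beta> (fst z) *v v + epsv \<alpha> \<beta> xs t (fst z) (snd z))
      \<in> borel_measurable (N \<Otimes>\<^sub>M (borel :: (real^('d + 'd)) measure))"
proof -
  have sets_prod: "sets (N \<Otimes>\<^sub>M (borel :: (real^('d + 'd)) measure)) = sets borel"
    unfolding sets_pair_measure_cong[OF N refl] borel_prod ..
  show ?thesis
    unfolding split_beta' measurable_cong_sets[OF sets_prod refl]
    by (intro borel_measurable_continuous_onI continuous_intros)
qed

lemma measurable_theta_v:
  fixes N :: "((real^'d) \<times> real) measure"
  assumes N: "sets N = sets borel" and "t \<le> n"
  shows "(\<lambda>h. theta_v \<alpha> \<beta> xs h t) \<in> borel_measurable (PiM {..<n} (\<lambda>_. N))"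
  using \<open>t \<le> n\<close>
proof (induction t)
  case (Suc t)
  then have "(\<lambda>h. (h t, theta_v \<alpha> \<beta> xs h t)) \<in> measurable (PiM {..<n} (\<lambda>_. N)) (N \<Otimes>\<^sub>M borel)"
    by (intro measurable_Pair measurable_component_singleton) auto
  from measurable_compose[OF this measurable_theta_v_step[OF N]] show ?case
    by simp
qed simp

lemma measurable_theta_v_sample:
  fixes N :: "((real^'d) \<times> real) measure" and X :: "nat \<Rightarrow> 'a \<Rightarrow> (real^'d) \<times> real"
  assumes N: "sets N = sets borel" and X: "\<And>s. X s \<in> measurable M N"
  shows "(\<lambda>\<omega>. theta_v \<alpha> \<beta> xs (\<lambda>s. X s \<omega>) t) \<in> borel_measurable M"
proof -
  have "(\<lambda>\<omega>. restrict (\<lambda>s. X s \<omega>) {..<t}) \<in> measurable M (PiM {..<t} (\<lambda>_. N))"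
    by (rule measurable_restrict) (rule X)
  from measurable_compose[OF this measurable_theta_v[OF N le_refl]]
  show ?thesis by (simp cong: theta_v_cong)
qed

lemma (in prob_space) indep_var_sample_theta_v:
  fixes N :: "((real^'d) \<times> real) measure" and f :: "(real^'d) \<times> real \<Rightarrow> real"
    and g :: "real^('d + 'd) \<Rightarrow> real"
  assumes X: "indep_vars (\<lambda>_. N) X UNIV" and N: "sets N = sets borel"
    and f: "f \<in> borel_measurable N" and g: "g \<in> borel_measurable borel"
  shows "indep_var borel (\<lambda>\<omega>. f (X t \<omega>)) borel (\<lambda>\<omega>. g (theta_v \<alpha> \<beta> xs (\<lambda>s. X s \<omega>) t))"
proof -
  have "indep_var (PiM {t} (\<lambda>_. N)) (\<lambda>\<omega>. restrict (\<lambda>s. X s \<omega>) {t})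
      (PiM {..<t} (\<lambda>_. N)) (\<lambda>\<omega>. restrict (\<lambda>s. X s \<omega>) {..<t})"
    by (rule indep_var_restrict[OF X]) auto
  moreover have "(\<lambda>h. f (h t)) \<in> borel_measurable (PiM {t} (\<lambda>_. N))"
    using measurable_compose[OF measurable_component_singleton[of t "{t}" "\<lambda>_. N"] f] by simp
  moreover have "(\<lambda>h. g (theta_v \<alpha> \<beta> xs h t)) \<in> borel_measurable (PiM {..<t} (\<lambda>_. N))"
    using measurable_compose[OF measurable_theta_v[OF N le_refl] g] .
  ultimately have "indep_var borel ((\<lambda>h. f (h t)) \<circ> (\<lambda>\<omega>. restrict (\<lambda>s. X s \<omega>) {t}))
      borel ((\<lambda>h. g (theta_v \<alpha> \<beta> xs h t)) \<circ> (\<lambda>\<omega>. restrict (\<lambda>s. X s \<omega>) {..<t}))"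
    by (rule indep_var_compose)
  then show ?thesis by (simp add: comp_def cong: theta_v_cong)
qed

section \<open>The least-squares model\<close>

locale lsq_setting =
  fixes \<rho> :: "((real^'d) \<times> real) measure"
    and H :: "real^'d^'d"
    and xs :: "real^'d"
    and R \<sigma> \<kappa> \<alpha> \<beta> :: real
  assumes rho_prob: "prob_space \<rho>"
    and rho_sets: "sets \<rho> = sets borel"
    and int_a2: "integrable \<rho> (\<lambda>(a, b). (norm a)^2)"
    and int_b2: "integrable \<rho> (\<lambda>(a, b). b^2)"
    and H_def: "H = integral\<^sup>L \<rho> (\<lambda>(a, b). outer a a)"
    and H_inv: "invertible H"
    and xs_min: "\<forall>x. risk \<rho> xs \<le> risk \<rho> x"
    and int_R: "integrable \<rho> (\<lambda>(a, b). (norm a)^2 *\<^sub>R outer a a)"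
    and hR: "loewner_le (integral\<^sup>L \<rho> (\<lambda>(a, b). (norm a)^2 *\<^sub>R outer a a)) (R^2 *\<^sub>R H)"
    and int_\<sigma>: "integrable \<rho> (\<lambda>(a, b). (b - xs \<bullet> a)^2 *\<^sub>R outer a a)"
    and h\<sigma>: "loewner_le (integral\<^sup>L \<rho> (\<lambda>(a, b). (b - xs \<bullet> a)^2 *\<^sub>R outer a a)) (\<sigma>^2 *\<^sub>R H)"
    and int_\<kappa>: "integrable \<rho> (\<lambda>(a, b). (a \<bullet> (matrix_inv H *v a)) *\<^sub>R outer a a)"
    and h\<kappa>: "loewner_le (integral\<^sup>L \<rho> (\<lambda>(a, b). (a \<bullet> (matrix_inv H *v a)) *\<^sub>R outer a a)) (\<kappa> *\<^sub>R H)"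
    and \<alpha>_pos: "\<alpha> > 0" and \<beta>_pos: "\<beta> > 0"
    and step1: "(\<alpha> + 2 * \<beta>) * R^2 \<le> 1"
    and step2: "\<alpha> \<le> \<beta> / (2 * \<kappa>)"

sublocale lsq_setting \<subseteq> rho: prob_space \<rho> by (rule rho_prob)

context lsq_setting
begin

lemma borel_measurable_rhoI: "continuous_on UNIV f \<Longrightarrow> f \<in> borel_measurable \<rho>"
  by (simp add: measurable_cong_sets[OF rho_sets refl] borel_measurable_continuous_onI)

lemma integrable_inner_mult: "integrable \<rho> (\<lambda>z. (fst z \<bullet> v) * (fst z \<bullet> w))"
  and integral_inner_mult: "(\<integral>z. (fst z \<bullet> v) * (fst z \<bullet> w) \<partial>\<rho>) = v \<bullet> (H *v w)"
proof -
  have "integrable \<rho> (\<lambda>z. outer (fst z) (fst z))"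
    by (rule integrable_norm_cancel[OF _ borel_measurable_rhoI])
       (use int_a2 in \<open>simp_all add: split_beta' norm_outer power2_eq_square continuous_intros\<close>)
  from integrable_inner_matrix_vector[OF this] integral_inner_matrix_vector[OF this]
  show "integrable \<rho> (\<lambda>z. (fst z \<bullet> v) * (fst z \<bullet> w))"
    "(\<integral>z. (fst z \<bullet> v) * (fst z \<bullet> w) \<partial>\<rho>) = v \<bullet> (H *v w)"
    by (simp_all add: inner_outer_mult H_def split_beta' inner_commute)
qed

lemma H_commute: "v \<bullet> (H *v w) = w \<bullet> (H *v v)"
  using integral_inner_mult[of v w] integral_inner_mult[of w v] by (simp add: mult.commute)

lemma H_nonneg: "0 \<le> v \<bullet> (H *v v)"
  using integral_inner_mult[of v v] by (metis integral_nonneg_AE AE_I2 zero_le_square)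

lemma integrable_R_moment: "integrable \<rho> (\<lambda>z. (norm (fst z))\<^sup>2 * (fst z \<bullet> w)\<^sup>2)"
  and R_moment_le: "(\<integral>z. (norm (fst z))\<^sup>2 * (fst z \<bullet> w)\<^sup>2 \<partial>\<rho>) \<le> R\<^sup>2 * (w \<bullet> (H *v w))"
  using integrable_inner_matrix_vector[OF int_R, of w w] integral_quadratic_le_loewner[OF int_R hR, of w]
  by (simp_all add: inner_outer_mult split_beta' inner_commute power2_eq_square
      flip: scaleR_matrix_vector_assoc)

lemma integrable_sigma_moment: "integrable \<rho> (\<lambda>z. (snd z - xs \<bullet> fst z)\<^sup>2 * (fst z \<bullet> w)\<^sup>2)"
  and sigma_moment_le: "(\<integral>z. (snd z - xs \<bullet> fst z)\<^sup>2 * (fst z \<bullet> w)\<^sup>2 \<partial>\<rho>) \<le> \<sigma>\<^sup>2 * (w \<bullet> (H *v w))"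
  using integrable_inner_matrix_vector[OF int_\<sigma>, of w w] integral_quadratic_le_loewner[OF int_\<sigma> h\<sigma>, of w]
  by (simp_all add: inner_outer_mult split_beta' inner_commute power2_eq_square
      flip: scaleR_matrix_vector_assoc)

lemma integrable_kappa_moment: "integrable \<rho> (\<lambda>z. (fst z \<bullet> (matrix_inv H *v fst z)) * (fst z \<bullet> w)\<^sup>2)"
  and kappa_moment_le:
    "(\<integral>z. (fst z \<bullet> (matrix_inv H *v fst z)) * (fst z \<bullet> w)\<^sup>2 \<partial>\<rho>) \<le> \<kappa> * (w \<bullet> (H *v w))"
  using integrable_inner_matrix_vector[OF int_\<kappa>, of w w] integral_quadratic_le_loewner[OF int_\<kappa> h\<kappa>, of w]
  by (simp_all add: inner_outer_mult split_beta' inner_commute power2_eq_square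
      flip: scaleR_matrix_vector_assoc)

lemma integrable_residual_sq: "integrable \<rho> (\<lambda>z. (snd z - xs \<bullet> fst z)\<^sup>2)"
proof -
  have b2: "integrable \<rho> (\<lambda>z. (snd z)\<^sup>2)" using int_b2 by (simp add: split_beta')
  have a2: "integrable \<rho> (\<lambda>z. (fst z \<bullet> xs)\<^sup>2)"
    using integrable_inner_mult[of xs xs] by (simp add: power2_eq_square)
  have "integrable \<rho> (\<lambda>z. snd z * (fst z \<bullet> xs))"
    by (rule integrable_mult_of_square_integrable[OF _ _ b2 a2])
       (auto intro!: borel_measurable_rhoI continuous_intros)
  moreover have "(snd z - xs \<bullet> fst z)\<^sup>2 = (snd z)\<^sup>2 + (fst z \<bullet> xs)\<^sup>2 - 2 * (snd z * (fst z \<bullet> xs))"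
    for z :: "(real^'d) \<times> real"
    by (simp add: power2_diff inner_commute)
  ultimately show ?thesis using a2 b2
    by (simp add: Bochner_Integration.integrable_diff)
qed

lemma integrable_residual_inner: "integrable \<rho> (\<lambda>z. (snd z - xs \<bullet> fst z) * (fst z \<bullet> w))"
  using integrable_residual_sq integrable_inner_mult[of w w]
  by (intro integrable_mult_of_square_integrable)
     (auto simp: power2_eq_square intro!: borel_measurable_rhoI continuous_intros)

text \<open>First-order optimality of \<open>xs\<close>: the risk along \<open>xs + s w\<close> is a quadratic in \<open>s\<close> minimal at \<open>s = 0\<close>.\<close>
lemma integral_residual_inner: "(\<integral>z. (snd z - xs \<bullet> fst z) * (fst z \<bullet> w) \<partial>\<rho>) = 0"
proof (rule eq_0_if_linear_le_quadratic)
  fix s :: real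
  define g where "g = (\<integral>z. (snd z - xs \<bullet> fst z) * (fst z \<bullet> w) \<partial>\<rho>)"
  have expand: "((xs + s *\<^sub>R w) \<bullet> fst z - snd z)\<^sup>2
      = (snd z - xs \<bullet> fst z)\<^sup>2 - 2 * s * ((snd z - xs \<bullet> fst z) * (fst z \<bullet> w))
        + s\<^sup>2 * ((fst z \<bullet> w) * (fst z \<bullet> w))" for z :: "(real^'d) \<times> real"
    by (simp add: inner_add_left inner_commute power2_eq_square algebra_simps)
  have "risk \<rho> (xs + s *\<^sub>R w) = risk \<rho> xs - s * g + s\<^sup>2 / 2 * (w \<bullet> (H *v w))"
    unfolding risk_def split_beta' expand g_def
    using integrable_residual_sq integrable_residual_inner[of w] integrable_inner_mult[of w w]
    by (simp add: integral_inner_mult power2_commute[of "xs \<bullet> _"]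
        Bochner_Integration.integral_add Bochner_Integration.integral_diff)
  moreover have "risk \<rho> xs \<le> risk \<rho> (xs + s *\<^sub>R w)" using xs_min by blast
  ultimately show "s * g \<le> s\<^sup>2 * ((w \<bullet> (H *v w)) / 2)" by (simp add: field_simps)
qed

text \<open>Cauchy-Schwarz in \<open>L\<^sup>2(\<rho>)\<close>, in the form \<open>2 h q \<le> q\<^sup>2 + h\<^sup>2\<close> for \<open>q = (a \<bullet> v)\<^sup>2\<close> and \<open>h = v \<bullet> H v\<close>.\<close>
lemma H_le_R2: "v \<bullet> (H *v v) \<le> R\<^sup>2 * (v \<bullet> v)"
proof -
  define h where "h = v \<bullet> (H *v v)"
  show ?thesis
  proof (cases "h = 0")
    case True then show ?thesis by (simp add: h_def)
  next
    case False
    then have h: "h > 0" using H_nonneg[of v] by (simp add: h_def)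
    have pointwise: "(fst z \<bullet> v) * (fst z \<bullet> v) \<le> (v \<bullet> v) / (2 * h) * ((norm (fst z))\<^sup>2 * (fst z \<bullet> v)\<^sup>2) + h / 2"
      for z :: "(real^'d) \<times> real"
    proof -
      define q where "q = (fst z \<bullet> v)\<^sup>2"
      have "q \<le> (norm (fst z))\<^sup>2 * (v \<bullet> v)"
        unfolding q_def using Cauchy_Schwarz_ineq[of "fst z" v] by (simp add: power2_norm_eq_inner)
      then have "q * q \<le> (norm (fst z))\<^sup>2 * (v \<bullet> v) * q"
        by (rule mult_right_mono) (simp add: q_def)
      moreover have "2 * h * q \<le> q * q + h\<^sup>2" using sum_squares_bound[of h q] by (simp add: power2_eq_square)
      ultimately have "2 * h * q \<le> (norm (fst z))\<^sup>2 * (v \<bullet> v) * q + h\<^sup>2" by linarith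
      then show ?thesis using h by (simp add: q_def field_simps power2_eq_square)
    qed
    have "h = (\<integral>z. (fst z \<bullet> v) * (fst z \<bullet> v) \<partial>\<rho>)" by (simp add: h_def integral_inner_mult)
    also have "\<dots> \<le> (\<integral>z. (v \<bullet> v) / (2 * h) * ((norm (fst z))\<^sup>2 * (fst z \<bullet> v)\<^sup>2) + h / 2 \<partial>\<rho>)"
      using integrable_inner_mult integrable_R_moment pointwise by (intro integral_mono) auto
    also have "\<dots> = (v \<bullet> v) / (2 * h) * (\<integral>z. (norm (fst z))\<^sup>2 * (fst z \<bullet> v)\<^sup>2 \<partial>\<rho>) + h / 2"
      using integrable_R_moment by (simp add: rho.prob_space)
    also have "\<dots> \<le> (v \<bullet> v) / (2 * h) * (R\<^sup>2 * h) + h / 2"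
      using R_moment_le[of v] h by (intro add_right_mono mult_left_mono) (auto simp: h_def)
    finally show ?thesis using h by (simp add: h_def field_simps)
  qed
qed

text \<open>For \<open>\<kappa> \<le> 0\<close> the bound \<open>\<beta> / (2 \<kappa>)\<close> is nonpositive, also at \<open>\<kappa> = 0\<close> where it is \<open>0\<close> by
  the convention \<open>x / 0 = 0\<close>.\<close>
lemma kappa_pos: "\<kappa> > 0"
proof (rule ccontr)
  assume "\<not> \<kappa> > 0"
  then have "\<beta> / (2 * \<kappa>) \<le> 0" using \<beta>_pos by (simp add: divide_nonneg_nonpos)
  then show False using step2 \<alpha>_pos by linarith
qed

lemma step_R: "(2 * \<beta> + \<alpha>) * R\<^sup>2 \<le> 1"
  using step1 by (simp add: algebra_simps)

lemma step_kappa: "2 * \<alpha> / \<beta> * \<kappa> \<le> 1"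
  using step2 kappa_pos \<beta>_pos by (simp add: field_simps)

lemma matrix_inv_H_lower: "(2 * \<beta> + \<alpha>) * (p \<bullet> p) \<le> p \<bullet> (matrix_inv H *v p)"
proof -
  have c: "1 / (2 * \<beta> + \<alpha>) > 0" using \<alpha>_pos \<beta>_pos by simp
  have "R\<^sup>2 \<le> 1 / (2 * \<beta> + \<alpha>)" using step_R \<alpha>_pos \<beta>_pos by (simp add: field_simps)
  then have "v \<bullet> (H *v v) \<le> 1 / (2 * \<beta> + \<alpha>) * (v \<bullet> v)" for v
    using H_le_R2[of v] by (meson inner_ge_zero mult_right_mono order_trans)
  from inner_le_matrix_inv[OF H_inv H_commute H_nonneg this c, of p]
  show ?thesis using \<alpha>_pos \<beta>_pos by (simp add: field_simps)
qed

lemma variance_matrix_psd: "0 \<le> u \<bullet> (variance_matrix \<alpha> \<beta> H *v u)"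
  using \<alpha>_pos \<beta>_pos matrix_inv_H_lower
  by (intro variance_matrix_nonneg[OF H_inv H_commute]) auto

lemma lyapunov_variance_matrix:
  fixes x y :: "real^'d"
  defines "B \<equiv> variance_matrix \<alpha> \<beta> H" and "V \<equiv> \<lambda>z. stack x y v* Jmat \<alpha> \<beta> (fst z)"
    and "w \<equiv> \<beta> *\<^sub>R x + \<alpha> *\<^sub>R y"
  shows "integrable \<rho> (\<lambda>z. V z \<bullet> (B *v V z))"
    and "(\<integral>z. V z \<bullet> (B *v V z) \<partial>\<rho>) + w \<bullet> (H *v w) \<le> stack x y \<bullet> (B *v stack x y)"
proof -
  define Hi where "Hi = matrix_inv H"
  define c where "c = stack x y \<bullet> (B *v stack x y) + 4 * \<alpha> / \<beta> * (x \<bullet> w)"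
  define K where "K = w \<bullet> (H *v w)"
  have pointwise: "V z \<bullet> (B *v V z) = c - 4 * \<alpha> / \<beta> * ((fst z \<bullet> w) * (fst z \<bullet> (Hi *v x)))
      - 2 * (2 * \<beta> + \<alpha>) / \<beta> * ((fst z \<bullet> w) * (fst z \<bullet> w))
      + 2 * \<alpha> / \<beta> * ((fst z \<bullet> (Hi *v fst z)) * (fst z \<bullet> w)\<^sup>2)
      + (2 * \<beta> + \<alpha>) * ((norm (fst z))\<^sup>2 * (fst z \<bullet> w)\<^sup>2)" for z
    unfolding V_def B_def c_def w_def Hi_def using \<beta>_pos
    by (intro quadratic_variance_matrix_Jmat[OF H_inv H_commute]) simp
  note integrable = integrable_inner_mult[of w "Hi *v x"] integrable_inner_mult[of w w]
    integrable_kappa_moment[of w, folded Hi_def] integrable_R_moment[of w]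
  show "integrable \<rho> (\<lambda>z. V z \<bullet> (B *v V z))"
    unfolding pointwise
    by (intro Bochner_Integration.integrable_add Bochner_Integration.integrable_diff
        Bochner_Integration.integrable_mult_right rho.integrable_const integrable)
  have "(\<integral>z. V z \<bullet> (B *v V z) \<partial>\<rho>) = c - 4 * \<alpha> / \<beta> * (w \<bullet> x) - 2 * (2 * \<beta> + \<alpha>) / \<beta> * K
      + 2 * \<alpha> / \<beta> * (\<integral>z. (fst z \<bullet> (Hi *v fst z)) * (fst z \<bullet> w)\<^sup>2 \<partial>\<rho>)
      + (2 * \<beta> + \<alpha>) * (\<integral>z. (norm (fst z))\<^sup>2 * (fst z \<bullet> w)\<^sup>2 \<partial>\<rho>)"
    unfolding pointwise K_def using integrable
    by (simp add: Hi_def integral_inner_mult matrix_vector_mul_assoc matrix_inv_right[OF H_inv] rho.prob_space)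
  also have "\<dots> \<le> c - 4 * \<alpha> / \<beta> * (w \<bullet> x) - 2 * (2 * \<beta> + \<alpha>) / \<beta> * K
      + 2 * \<alpha> / \<beta> * (\<kappa> * K) + (2 * \<beta> + \<alpha>) * (R\<^sup>2 * K)"
    using kappa_moment_le[of w] R_moment_le[of w] \<alpha>_pos \<beta>_pos
    by (intro add_mono mult_left_mono order_refl) (auto simp: Hi_def K_def)
  also have "\<dots> \<le> stack x y \<bullet> (B *v stack x y) - K"
  proof -
    have K: "0 \<le> K" unfolding K_def by (rule H_nonneg)
    have "2 * \<alpha> / \<beta> * (\<kappa> * K) \<le> K" "(2 * \<beta> + \<alpha>) * (R\<^sup>2 * K) \<le> K"
      using mult_right_mono[OF step_kappa K] mult_right_mono[OF step_R K] by (simp_all add: mult.assoc)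
    moreover have "4 * K \<le> 2 * (2 * \<beta> + \<alpha>) / \<beta> * K"
      using K \<alpha>_pos \<beta>_pos by (simp add: field_simps)
    ultimately show ?thesis using K unfolding c_def inner_commute[of w x] by linarith
  qed
  finally show "(\<integral>z. V z \<bullet> (B *v V z) \<partial>\<rho>) + w \<bullet> (H *v w) \<le> stack x y \<bullet> (B *v stack x y)"
    by (simp add: K_def)
qed

lemma integrable_norm_Jmat_sq: "integrable \<rho> (\<lambda>z. (norm (stack x y v* Jmat \<alpha> \<beta> (fst z)))\<^sup>2)"
proof -
  define w where "w = \<beta> *\<^sub>R x + \<alpha> *\<^sub>R y"
  have "(norm (stack x y v* Jmat \<alpha> \<beta> a))\<^sup>2 = (norm (stack x (x + y)))\<^sup>2
      - 2 * ((a \<bullet> w) * (a \<bullet> (2 *\<^sub>R x + y))) + 2 * ((norm a)\<^sup>2 * (a \<bullet> w)\<^sup>2)" for a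
    unfolding stack_vector_matrix_Jmat w_def[symmetric] power2_norm_eq_inner
    by (simp add: inner_diff_left inner_diff_right inner_stack inner_add_right inner_commute
        algebra_simps power2_eq_square)
  then show ?thesis
    using integrable_inner_mult[of w "2 *\<^sub>R x + y"] integrable_R_moment[of w] by simp
qed

lemma integrable_noise_sq: "integrable \<rho> (\<lambda>z. (stack x y \<bullet> epsv \<alpha> \<beta> xs t (fst z) (snd z))\<^sup>2)"
  unfolding inner_stack_epsv power_mult_distrib using integrable_sigma_moment by simp

lemma integral_noise: "(\<integral>z. stack x y \<bullet> epsv \<alpha> \<beta> xs t (fst z) (snd z) \<partial>\<rho>) = 0"
  unfolding inner_stack_epsv using integral_residual_inner by simp

lemma integral_noise_sq_le:
  "(\<integral>z. (stack x y \<bullet> epsv \<alpha> \<beta> xs t (fst z) (snd z))\<^sup>2 \<partial>\<rho>)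
     \<le> (real t + 1)\<^sup>2 * \<sigma>\<^sup>2 * ((\<beta> *\<^sub>R x + \<alpha> *\<^sub>R y) \<bullet> (H *v (\<beta> *\<^sub>R x + \<alpha> *\<^sub>R y)))"
  unfolding inner_stack_epsv power_mult_distrib
  using mult_left_mono[OF sigma_moment_le[of "\<beta> *\<^sub>R x + \<alpha> *\<^sub>R y"], of "(real t + 1)\<^sup>2"]
  by (simp add: mult.assoc add.commute)

lemma borel_measurable_Jmat: "(\<lambda>z. stack x y v* Jmat \<alpha> \<beta> (fst z)) \<in> borel_measurable \<rho>"
  unfolding stack_vector_matrix_Jmat by (intro borel_measurable_rhoI continuous_intros)

lemma borel_measurable_noise: "(\<lambda>z. stack x y \<bullet> epsv \<alpha> \<beta> xs t (fst z) (snd z)) \<in> borel_measurable \<rho>"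
  by (intro borel_measurable_rhoI continuous_intros)

end

section \<open>Moments of the variance process\<close>

locale lsq_sample = lsq_setting \<rho> H xs R \<sigma> \<kappa> \<alpha> \<beta>
  for \<rho> :: "((real^'d) \<times> real) measure" and H xs R \<sigma> \<kappa> \<alpha> \<beta> +
  fixes M :: "'w measure" and X :: "nat \<Rightarrow> 'w \<Rightarrow> (real^'d) \<times> real"
  assumes M_prob: "prob_space M"
    and X_indep: "prob_space.indep_vars M (\<lambda>_. \<rho>) X UNIV"
    and X_distr: "\<And>s. distr M \<rho> (X s) = \<rho>"

sublocale lsq_sample \<subseteq> M: prob_space M by (rule M_prob)

context lsq_sample
begin

abbreviation theta :: "nat \<Rightarrow> 'w \<Rightarrow> real^('d + 'd)" where
  "theta t \<omega> \<equiv> theta_v \<alpha> \<beta> xs (\<lambda>s. X s \<omega>) t"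

lemma measurable_X: "X s \<in> measurable M \<rho>"
  using X_indep unfolding M.indep_vars_def by auto

lemma variance_process_step:
  assumes sq: "\<And>v. integrable M (\<lambda>\<omega>. (v \<bullet> theta t \<omega>)\<^sup>2)"
    and mean: "\<And>v. (\<integral>\<omega>. v \<bullet> theta t \<omega> \<partial>M) = 0"
    and bound: "\<And>v. (\<integral>\<omega>. (v \<bullet> theta t \<omega>)\<^sup>2 \<partial>M) \<le> (real t)\<^sup>2 * \<sigma>\<^sup>2 * (v \<bullet> (variance_matrix \<alpha> \<beta> H *v v))"
  shows "integrable M (\<lambda>\<omega>. (u \<bullet> theta (Suc t) \<omega>)\<^sup>2)"
    and "(\<integral>\<omega>. u \<bullet> theta (Suc t) \<omega> \<partial>M) = 0"
    and "(\<integral>\<omega>. (u \<bullet> theta (Suc t) \<omega>)\<^sup>2 \<partial>M) \<le> (real (Suc t))\<^sup>2 * \<sigma>\<^sup>2 * (u \<bullet> (variance_matrix \<alpha> \<beta> H *v u))"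
proof -
  obtain x y where u: "u = stack x y" using ex_stack by blast
  define B where "B = variance_matrix \<alpha> \<beta> H"
  define V where "V z = stack x y v* Jmat \<alpha> \<beta> (fst z)" for z :: "(real^'d) \<times> real"
  define e where "e z = stack x y \<bullet> epsv \<alpha> \<beta> xs t (fst z) (snd z)" for z :: "(real^'d) \<times> real"
  define w where "w = \<beta> *\<^sub>R x + \<alpha> *\<^sub>R y"
  have recursion: "u \<bullet> theta (Suc t) \<omega> = V (X t \<omega>) \<bullet> theta t \<omega> + e (X t \<omega>)" for \<omega>
    by (simp add: u V_def e_def inner_add_right dot_lmul_matrix)
  note moments = M.indep_affine_moments[OF measurable_X X_distr
      measurable_theta_v_sample[OF rho_sets measurable_X] M.indep_var_sample_theta_v[OF X_indep rho_sets]
      borel_measurable_Jmat[of x y, folded V_def] integrable_norm_Jmat_sq[of x y, folded V_def]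
      borel_measurable_noise[of x y t, folded e_def] integrable_noise_sq[of x y t, folded e_def] sq mean]
  note lyapunov = lyapunov_variance_matrix[of x y, folded V_def B_def w_def]
  show "integrable M (\<lambda>\<omega>. (u \<bullet> theta (Suc t) \<omega>)\<^sup>2)"
    unfolding recursion by (rule moments(3))
  have "(\<integral>\<omega>. u \<bullet> theta (Suc t) \<omega> \<partial>M) = (\<integral>z. e z \<partial>\<rho>)"
    unfolding recursion by (rule moments(2))
  also have "\<dots> = 0" unfolding e_def by (rule integral_noise)
  finally show "(\<integral>\<omega>. u \<bullet> theta (Suc t) \<omega> \<partial>M) = 0" .
  define Q where "Q = (\<integral>z. V z \<bullet> (B *v V z) \<partial>\<rho>)"
  have "(\<integral>\<omega>. (u \<bullet> theta (Suc t) \<omega>)\<^sup>2 \<partial>M) = (\<integral>z. (\<integral>\<omega>. (V z \<bullet> theta t \<omega>)\<^sup>2 \<partial>M) \<partial>\<rho>) + (\<integral>z. (e z)\<^sup>2 \<partial>\<rho>)"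
    unfolding recursion by (rule moments(5))
  also have "\<dots> \<le> (real t)\<^sup>2 * \<sigma>\<^sup>2 * Q + (real t + 1)\<^sup>2 * \<sigma>\<^sup>2 * (w \<bullet> (H *v w))"
  proof (rule add_mono)
    have "(\<integral>z. (\<integral>\<omega>. (V z \<bullet> theta t \<omega>)\<^sup>2 \<partial>M) \<partial>\<rho>) \<le> (\<integral>z. (real t)\<^sup>2 * \<sigma>\<^sup>2 * (V z \<bullet> (B *v V z)) \<partial>\<rho>)"
      using moments(4) Bochner_Integration.integrable_mult_right[OF lyapunov(1)] bound
      unfolding B_def by (rule integral_mono)
    then show "(\<integral>z. (\<integral>\<omega>. (V z \<bullet> theta t \<omega>)\<^sup>2 \<partial>M) \<partial>\<rho>) \<le> (real t)\<^sup>2 * \<sigma>\<^sup>2 * Q"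
      by (simp add: Q_def)
    show "(\<integral>z. (e z)\<^sup>2 \<partial>\<rho>) \<le> (real t + 1)\<^sup>2 * \<sigma>\<^sup>2 * (w \<bullet> (H *v w))"
      unfolding e_def w_def by (rule integral_noise_sq_le)
  qed
  also have "\<dots> \<le> (real (Suc t))\<^sup>2 * \<sigma>\<^sup>2 * (u \<bullet> (B *v u))"
  proof -
    have "0 \<le> Q" unfolding Q_def B_def by (intro integral_nonneg_AE AE_I2 variance_matrix_psd)
    then have "(real t)\<^sup>2 * \<sigma>\<^sup>2 * Q \<le> (real t + 1)\<^sup>2 * \<sigma>\<^sup>2 * Q"
      by (intro mult_right_mono) (auto intro: power_mono)
    moreover have "(real t + 1)\<^sup>2 * \<sigma>\<^sup>2 * (Q + w \<bullet> (H *v w)) \<le> (real t + 1)\<^sup>2 * \<sigma>\<^sup>2 * (u \<bullet> (B *v u))"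
      using lyapunov(2) by (intro mult_left_mono) (auto simp: Q_def u)
    ultimately show ?thesis by (simp add: algebra_simps)
  qed
  finally show "(\<integral>\<omega>. (u \<bullet> theta (Suc t) \<omega>)\<^sup>2 \<partial>M) \<le> (real (Suc t))\<^sup>2 * \<sigma>\<^sup>2 * (u \<bullet> (variance_matrix \<alpha> \<beta> H *v u))"
    by (simp only: B_def)
qed

lemma variance_process_moments:
  "integrable M (\<lambda>\<omega>. (u \<bullet> theta t \<omega>)\<^sup>2) \<and> (\<integral>\<omega>. u \<bullet> theta t \<omega> \<partial>M) = 0
   \<and> (\<integral>\<omega>. (u \<bullet> theta t \<omega>)\<^sup>2 \<partial>M) \<le> (real t)\<^sup>2 * \<sigma>\<^sup>2 * (u \<bullet> (variance_matrix \<alpha> \<beta> H *v u))"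
proof (induction t arbitrary: u)
  case (Suc t)
  note sq = conjunct1[OF Suc.IH] and mean = conjunct1[OF conjunct2[OF Suc.IH]]
    and bound = conjunct2[OF conjunct2[OF Suc.IH]]
  show ?case by (intro conjI variance_process_step[OF sq mean bound])
qed simp

lemma variance_process_second_moment:
  "integrable M (\<lambda>\<omega>. outer (theta t \<omega>) (theta t \<omega>))
   \<and> loewner_le (\<integral>\<omega>. outer (theta t \<omega>) (theta t \<omega>) \<partial>M) (((real t)\<^sup>2 * \<sigma>\<^sup>2) *\<^sub>R variance_matrix \<alpha> \<beta> H)"
proof
  note sq = conjunct1[OF variance_process_moments]
    and bound = conjunct2[OF conjunct2[OF variance_process_moments]]
  have norm_eq: "norm (outer v v) = (\<Sum>i\<in>UNIV. (axis i 1 \<bullet> v)\<^sup>2)" for v :: "real^('d + 'd)"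
  proof -
    have "norm (outer v v) = v \<bullet> v"
      by (simp add: norm_outer power2_norm_eq_inner[symmetric] power2_eq_square)
    also have "\<dots> = (\<Sum>i\<in>UNIV. (v $ i)\<^sup>2)" by (simp add: inner_vec_def power2_eq_square)
    finally show ?thesis by (simp add: inner_axis')
  qed
  have theta: "(\<lambda>\<omega>. theta t \<omega>) \<in> borel_measurable M"
    by (rule measurable_theta_v_sample[OF rho_sets measurable_X])
  have "(\<lambda>v::real^('d + 'd). outer v v) \<in> borel_measurable borel"
    by (intro borel_measurable_continuous_onI continuous_intros)
  from measurable_comp[OF theta this]
  have meas: "(\<lambda>\<omega>. outer (theta t \<omega>) (theta t \<omega>)) \<in> borel_measurable M" by (simp only: comp_def)
  have "integrable M (\<lambda>\<omega>. norm (outer (theta t \<omega>) (theta t \<omega>)))"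
    unfolding norm_eq by (intro Bochner_Integration.integrable_sum sq)
  from integrable_norm_cancel[OF this meas]
  show int: "integrable M (\<lambda>\<omega>. outer (theta t \<omega>) (theta t \<omega>))" .
  show "loewner_le (\<integral>\<omega>. outer (theta t \<omega>) (theta t \<omega>) \<partial>M) (((real t)\<^sup>2 * \<sigma>\<^sup>2) *\<^sub>R variance_matrix \<alpha> \<beta> H)"
    unfolding loewner_le_def
  proof
    fix v
    have "v \<bullet> ((\<integral>\<omega>. outer (theta t \<omega>) (theta t \<omega>) \<partial>M) *v v) = (\<integral>\<omega>. (v \<bullet> theta t \<omega>)\<^sup>2 \<partial>M)"
      unfolding integral_inner_matrix_vector[OF int, symmetric] inner_outer_mult
      by (simp add: inner_commute power2_eq_square)
    also have "\<dots> \<le> v \<bullet> ((((real t)\<^sup>2 * \<sigma>\<^sup>2) *\<^sub>R variance_matrix \<alpha> \<beta> H) *v v)"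
      using bound[of v] by (simp flip: scaleR_matrix_vector_assoc)
    finally show "v \<bullet> ((\<integral>\<omega>. outer (theta t \<omega>) (theta t \<omega>) \<partial>M) *v v)
        \<le> v \<bullet> ((((real t)\<^sup>2 * \<sigma>\<^sup>2) *\<^sub>R variance_matrix \<alpha> \<beta> H) *v v)" .
  qed
qed

end

theorem lemma7:
  fixes \<rho> :: "((real^'d) \<times> real) measure"
    and M :: "'w measure"
    and X :: "nat \<Rightarrow> 'w \<Rightarrow> (real^'d) \<times> real"
    and H :: "real^'d^'d"
    and xs :: "real^'d"
    and R \<sigma> \<kappa> \<alpha> \<beta> :: real
    and t :: nat
  assumes rho_prob: "prob_space \<rho>"
    and rho_sets: "sets \<rho> = sets borel"
    and int_a2: "integrable \<rho> (\<lambda>(a, b). (norm a)^2)"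
    and int_b2: "integrable \<rho> (\<lambda>(a, b). b^2)"
    and H_def: "H = integral\<^sup>L \<rho> (\<lambda>(a, b). outer a a)"
    and H_inv: "invertible H"
    and xs_min: "\<forall>x. risk \<rho> xs \<le> risk \<rho> x"
    and int_R: "integrable \<rho> (\<lambda>(a, b). (norm a)^2 *\<^sub>R outer a a)"
    and hR: "loewner_le (integral\<^sup>L \<rho> (\<lambda>(a, b). (norm a)^2 *\<^sub>R outer a a)) (R^2 *\<^sub>R H)"
    and int_\<sigma>: "integrable \<rho> (\<lambda>(a, b). (b - xs \<bullet> a)^2 *\<^sub>R outer a a)"
    and h\<sigma>: "loewner_le (integral\<^sup>L \<rho> (\<lambda>(a, b). (b - xs \<bullet> a)^2 *\<^sub>R outer a a)) (\<sigma>^2 *\<^sub>R H)"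
    and int_\<kappa>: "integrable \<rho> (\<lambda>(a, b). (a \<bullet> (matrix_inv H *v a)) *\<^sub>R outer a a)"
    and h\<kappa>: "loewner_le (integral\<^sup>L \<rho> (\<lambda>(a, b). (a \<bullet> (matrix_inv H *v a)) *\<^sub>R outer a a)) (\<kappa> *\<^sub>R H)"
    and \<alpha>_pos: "\<alpha> > 0" and \<beta>_pos: "\<beta> > 0"
    and step1: "(\<alpha> + 2 * \<beta>) * R^2 \<le> 1"
    and step2: "\<alpha> \<le> \<beta> / (2 * \<kappa>)"
    and M_prob: "prob_space M"
    and X_indep: "prob_space.indep_vars M (\<lambda>_. \<rho>) X UNIV"
    and X_distr: "\<And>s. distr M \<rho> (X s) = \<rho>"
  shows "integrable M (\<lambda>\<omega>. outer (theta_v \<alpha> \<beta> xs (\<lambda>s. X s \<omega>) t) (theta_v \<alpha> \<beta> xs (\<lambda>s. X s \<omega>) t))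
    \<and> loewner_le
        (integral\<^sup>L M (\<lambda>\<omega>. outer (theta_v \<alpha> \<beta> xs (\<lambda>s. X s \<omega>) t) (theta_v \<alpha> \<beta> xs (\<lambda>s. X s \<omega>) t)))
        (((real t)^2 * \<sigma>^2) *\<^sub>R
           blockm ((2 * \<alpha>) *\<^sub>R matrix_inv (\<beta> *\<^sub>R H) + (2 * \<beta> - 3 * \<alpha>) *\<^sub>R mat 1)
                  ((\<alpha> / \<beta> * (2 * \<beta> - \<alpha>)) *\<^sub>R mat 1)
                  ((\<alpha> / \<beta> * (2 * \<beta> - \<alpha>)) *\<^sub>R mat 1)
                  ((2 * \<alpha>^2 / \<beta>) *\<^sub>R mat 1))"
proof -
  interpret lsq_sample \<rho> H xs R \<sigma> \<kappa> \<alpha> \<beta> M X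
    by (intro lsq_sample.intro lsq_setting.intro lsq_sample_axioms.intro) (fact assms)+
  show ?thesis
    using variance_process_second_moment[of t] unfolding variance_matrix_def .
qed

end
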